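(* Let $C$ be the plane affine curve over $\mathbb{R}$ with equation $x_1^2+x_2^2=1$ and $V=C\times\mathbb{A}^1$, so $\mathbb{R}[V]=\mathbb{R}[C][y]$. Let $f\in\mathbb{R}[V]$ and $b\in\mathbb{R}[C]$ be sums of squares (in $\mathbb{R}[V]$ and $\mathbb{R}[C]$ respectively), and assume that $b$ has only real zeros on $C$ (i.e. all zeros of $b$ in $C(\mathbb{C})$ lie in $C(\mathbb{R})$). If there is $g\in\mathbb{R}[V]$ with $f=bg$, then $g$ is a sum of squares in $\mathbb{R}[V]$. *)

theory Defs
  imports Complex_Main "HOL-Computational_Algebra.Polynomial"
begin

text \<open>Polynomial rings are modelled by nested univariate polynomials:
  R[x1,x2]   = real poly poly        (inner variable x1, outer variable x2)
  R[x1,x2,y] = real poly poly poly   (outermost variable y).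
  The coordinate ring R[C] is R[x1,x2] modulo the ideal generated by
  hC = x1^2 + x2^2 - 1, and R[V] = R[C][y] is R[x1,x2,y] modulo the ideal
  generated by hC (viewed as a constant in y).  Elements of the coordinate
  rings are represented by polynomial representatives; equality in the
  coordinate ring is congruence modulo the principal ideal.\<close>

definition hC :: "real poly poly" where
  "hC = [: [:-1, 0, 1:], 0, 1 :]"

definition hV :: "real poly poly poly" where
  "hV = [: hC :]"

definition sos_mod :: "'a::comm_ring_1 \<Rightarrow> 'a \<Rightarrow> bool" where
  "sos_mod h p \<longleftrightarrow> (\<exists>gs. h dvd (p - sum_list (map (\<lambda>g. g ^ 2) gs)))"

definition evalC :: "real poly poly \<Rightarrow> complex \<Rightarrow> complex \<Rightarrow> complex" where
  "evalC b z1 z2 = poly (map_poly (\<lambda>q. poly (map_poly complex_of_real q) z1) b) z2"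

end

theory Submission
  imports Defs "HOL-Computational_Algebra.Fundamental_Theorem_Algebra"
begin

text \<open>Every b \<in> \<real>[C] is congruent to p + x2 q with p, q \<in> \<real>[x1], and the degree of its norm
  N(b) = p^2 + (x1^2 - 1) q^2 drives a descent. If deg N(b) > 0, then N(b) has a complex
  root, which yields a zero of b on C(\<complex>); by hypothesis it is a real point (a1, a2).
  Modulo the circle, the square of a polynomial vanishing at (a1, a2) is the tangent line
  L = 1 - a1 x1 - a2 x2 times a sum of two squares. Applied to the squares in b, and in f
  (which vanishes on {(a1, a2)} \<times> \<real> because f = b g), this gives b = L b' and f = L f' with
  b', f' sums of squares. Since L (1 - a1 x1 + a2 x2) = (x1 - a1)^2 modulo the circle, L is
  not a zero divisor, so f' = b' g; moreover N(b) = (x1 - a1)^2 N(b') and b' again has only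
  real zeros.
  When deg N(b) = 0, b is a positive constant c and g = f / c.\<close>

section \<open>Sums of squares modulo an element\<close>

abbreviation sum_sq :: "'a::comm_ring_1 list \<Rightarrow> 'a" where
  "sum_sq xs \<equiv> sum_list (map (\<lambda>x. x ^ 2) xs)"

lemma sum_sq_map_mult: "sum_sq (map ((*) s) xs) = s ^ 2 * sum_sq xs"
  by (induction xs) (simp_all add: power_mult_distrib distrib_left)

lemma sum_sq_nonneg: "0 \<le> sum_sq (xs :: 'a::linordered_idom list)"
  by (induction xs) simp_all

lemma sum_sq_eq_0_iff:
  fixes xs :: "'a::linordered_idom list"
  shows "sum_sq xs = 0 \<longleftrightarrow> (\<forall>x\<in>set xs. x = 0)"
  by (induction xs) (simp_all add: add_nonneg_eq_0_iff sum_sq_nonneg)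

lemma sos_mod_cong:
  assumes "sos_mod h p" and "h dvd p - q"
  shows "sos_mod h q"
proof -
  obtain gs where "h dvd p - sum_sq gs"
    using assms(1) unfolding sos_mod_def by blast
  then have "h dvd (p - sum_sq gs) - (p - q)"
    using assms(2) by (rule dvd_diff)
  then have "h dvd q - sum_sq gs"
    by simp
  then show ?thesis
    unfolding sos_mod_def by blast
qed

lemma sos_mod_mult_square:
  assumes "sos_mod h p"
  shows "sos_mod h (s ^ 2 * p)"
proof -
  obtain gs where "h dvd p - sum_sq gs"
    using assms unfolding sos_mod_def by blast
  moreover have "s ^ 2 * p - sum_sq (map ((*) s) gs) = s ^ 2 * (p - sum_sq gs)"
    by (simp only: sum_sq_map_mult right_diff_distrib)
  ultimately have "h dvd s ^ 2 * p - sum_sq (map ((*) s) gs)"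
    by simp
  then show ?thesis
    unfolding sos_mod_def by blast
qed

lemma sos_mod_factor:
  assumes "h dvd p - sum_sq fs"
    and "\<And>f. f \<in> set fs \<Longrightarrow> \<exists>u v. h dvd f ^ 2 - l * (u ^ 2 + v ^ 2)"
  shows "\<exists>q. sos_mod h q \<and> h dvd p - l * q"
  using assms
proof (induction fs arbitrary: p)
  case Nil
  then have "sos_mod h 0 \<and> h dvd p - l * 0"
    unfolding sos_mod_def by (auto intro: exI[of _ "[]"])
  then show ?case by blast
next
  case (Cons f fs)
  obtain u v where uv: "h dvd f ^ 2 - l * (u ^ 2 + v ^ 2)"
    using Cons.prems(2)[of f] by auto
  have "h dvd (p - f ^ 2) - sum_sq fs"
    using Cons.prems(1) by (simp add: algebra_simps)
  then obtain q where q: "sos_mod h q" "h dvd (p - f ^ 2) - l * q"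
    using Cons by auto
  then obtain gs where gs: "h dvd q - sum_sq gs"
    unfolding sos_mod_def by blast
  have "sos_mod h (u ^ 2 + v ^ 2 + q)"
    using gs unfolding sos_mod_def by (auto intro!: exI[of _ "u # v # gs"] simp: algebra_simps)
  moreover have "h dvd p - l * (u ^ 2 + v ^ 2 + q)"
    using dvd_add[OF uv q(2)] by (simp add: algebra_simps)
  ultimately show ?case by blast
qed

lemma square_mod_circle_tangent:
  fixes x y a b c A B :: "'a::comm_ring_1"
  assumes "a ^ 2 + b ^ 2 = 1" and "c ^ 2 + c ^ 2 = 1"
  shows "\<exists>u v. x ^ 2 + y ^ 2 - 1 dvd
           ((y - b) * A + (x - a) * B) ^ 2 - (1 - a * x - b * y) * (u ^ 2 + v ^ 2)"
proof -
  define F where "F = (y - b) * A + (x - a) * B"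
  define V where "V = (x + a) * A - (y + b) * B"
  define L where "L = 1 - a * x - b * y"
  \<comment> \<open>For w = x + iy and \<alpha> = a + ib on the unit circle, (w + \<alpha>) / (w - \<alpha>) = ik with k real,
    so V = -k F and 1 + k^2 = 2 / L; hence L (F^2 + V^2) = 2 F^2 on the circle.\<close>
  have "2 * F ^ 2 - L * (F ^ 2 + V ^ 2)
     = (x^2 + y^2 - 1) * (A^2 - B^2 + 2*b^2*B^2 - 2*b^2*A^2 - 4*a*b*A*B + y*b*B^2 + y*b*A^2 + x*a*B^2 + x*a*A^2)
     + (a^2 + b^2 - 1) * (B^2 - A^2 + y*b*B^2 + y*b*A^2 + x*a*B^2 + x*a*A^2 - 4*x*y*A*B - 2*x^2*B^2 + 2*x^2*A^2)"
    unfolding F_def V_def L_def by (simp add: algebra_simps power2_eq_square)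
  then have "x ^ 2 + y ^ 2 - 1 dvd 2 * F ^ 2 - L * (F ^ 2 + V ^ 2)"
    using assms(1) by simp
  then have "x ^ 2 + y ^ 2 - 1 dvd c ^ 2 * (2 * F ^ 2 - L * (F ^ 2 + V ^ 2))"
    by (rule dvd_mult)
  also have "c ^ 2 * (2 * F ^ 2 - L * (F ^ 2 + V ^ 2))
      = (c ^ 2 + c ^ 2) * F ^ 2 - L * ((c * F) ^ 2 + (c * V) ^ 2)"
    by (simp add: algebra_simps power_mult_distrib)
  also have "\<dots> = F ^ 2 - L * ((c * F) ^ 2 + (c * V) ^ 2)"
    using assms(2) by simp
  finally show ?thesis
    unfolding F_def L_def by blast
qed

section \<open>Coordinates and real evaluation\<close>

definition X1 :: "real poly poly" where
  "X1 = [:[:0, 1:]:]"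

definition X2 :: "real poly poly" where
  "X2 = [:0, 1:]"

definition const2 :: "real \<Rightarrow> real poly poly" where
  "const2 r = [:[:r:]:]"

definition tangent :: "real \<Rightarrow> real \<Rightarrow> real poly poly" where
  "tangent a1 a2 = [:[:1, - a1:], [:- a2:]:]"

lemma const2_simps [simp]:
  "const2 0 = 0" "const2 1 = 1"
  "const2 r + const2 s = const2 (r + s)" "const2 r - const2 s = const2 (r - s)"
  "const2 r * const2 s = const2 (r * s)" "const2 r ^ n = const2 (r ^ n)"
  by (simp_all add: const2_def one_pCons) (induction n, simp_all add: const2_def one_pCons)

lemma hC_eq: "hC = X1 ^ 2 + X2 ^ 2 - 1"
  by (simp add: hC_def X1_def X2_def power2_eq_square one_pCons)

lemma tangent_eq: "tangent a1 a2 = 1 - const2 a1 * X1 - const2 a2 * X2"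
  by (simp add: tangent_def const2_def X1_def X2_def one_pCons)

definition eval2 :: "real poly poly \<Rightarrow> real \<Rightarrow> real \<Rightarrow> real" where
  "eval2 c a1 a2 = poly (poly c [:a2:]) a1"

definition eval3 :: "real poly poly poly \<Rightarrow> real \<Rightarrow> real \<Rightarrow> real \<Rightarrow> real" where
  "eval3 F a1 a2 y = eval2 (poly F [:[:y:]:]) a1 a2"

lemma eval2_simps [simp]:
  "eval2 0 a1 a2 = 0" "eval2 1 a1 a2 = 1"
  "eval2 (c + d) a1 a2 = eval2 c a1 a2 + eval2 d a1 a2"
  "eval2 (c - d) a1 a2 = eval2 c a1 a2 - eval2 d a1 a2"
  "eval2 (c * d) a1 a2 = eval2 c a1 a2 * eval2 d a1 a2"
  "eval2 (c ^ n) a1 a2 = eval2 c a1 a2 ^ n"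
  "eval2 X1 a1 a2 = a1" "eval2 X2 a1 a2 = a2" "eval2 (const2 r) a1 a2 = r"
  by (simp_all add: eval2_def X1_def X2_def const2_def)

lemma eval3_simps [simp]:
  "eval3 (F + G) a1 a2 y = eval3 F a1 a2 y + eval3 G a1 a2 y"
  "eval3 (F - G) a1 a2 y = eval3 F a1 a2 y - eval3 G a1 a2 y"
  "eval3 (F * G) a1 a2 y = eval3 F a1 a2 y * eval3 G a1 a2 y"
  "eval3 (F ^ n) a1 a2 y = eval3 F a1 a2 y ^ n"
  "eval3 [:c:] a1 a2 y = eval2 c a1 a2"
  "eval3 (smult c F) a1 a2 y = eval2 c a1 a2 * eval3 F a1 a2 y"
  by (simp_all add: eval3_def)

lemma eval3_eq_poly_map_poly: "eval3 F a1 a2 y = poly (map_poly (\<lambda>c. eval2 c a1 a2) F) y"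
  by (induction F) (simp_all add: eval3_def eval2_def map_poly_pCons)

lemma eval2_sum_sq: "eval2 (sum_sq cs) a1 a2 = sum_sq (map (\<lambda>c. eval2 c a1 a2) cs)"
  by (induction cs) simp_all

lemma eval3_sum_sq: "eval3 (sum_sq Fs) a1 a2 y = sum_sq (map (\<lambda>F. eval3 F a1 a2 y) Fs)"
  by (induction Fs) (simp_all add: eval3_def)

lemma eval2_hC: "eval2 hC a1 a2 = a1 ^ 2 + a2 ^ 2 - 1"
  by (simp add: hC_eq)

lemma eval2_cong:
  assumes "hC dvd c - d" and "a1 ^ 2 + a2 ^ 2 = 1"
  shows "eval2 c a1 a2 = eval2 d a1 a2"
proof -
  obtain k where "c - d = hC * k"
    using assms(1) by (elim dvdE)
  then have "eval2 c a1 a2 - eval2 d a1 a2 = eval2 hC a1 a2 * eval2 k a1 a2"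
    by (metis eval2_simps(4,5))
  then show ?thesis
    using assms(2) by (simp add: eval2_hC)
qed

lemma eval3_cong:
  assumes "hV dvd F - G" and "a1 ^ 2 + a2 ^ 2 = 1"
  shows "eval3 F a1 a2 y = eval3 G a1 a2 y"
proof -
  obtain k where "F - G = hV * k"
    using assms(1) by (elim dvdE)
  then have "eval3 F a1 a2 y - eval3 G a1 a2 y = eval2 hC a1 a2 * eval3 k a1 a2 y"
    unfolding hV_def by (metis eval3_simps(2,3,5))
  then show ?thesis
    using assms(2) by (simp add: eval2_hC)
qed

lemma eval2_sum_sq_eq_0:
  assumes "hC dvd c - sum_sq cs" and "a1 ^ 2 + a2 ^ 2 = 1" and "eval2 c a1 a2 = 0"
  shows "\<forall>d\<in>set cs. eval2 d a1 a2 = 0"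
proof -
  have "sum_sq (map (\<lambda>d. eval2 d a1 a2) cs) = 0"
    using eval2_cong[OF assms(1,2)] assms(3) by (simp add: eval2_sum_sq)
  then have "\<forall>x\<in>set (map (\<lambda>d. eval2 d a1 a2) cs). x = 0"
    by (simp only: sum_sq_eq_0_iff)
  then show ?thesis
    by simp
qed

lemma eval3_sum_sq_eq_0:
  assumes "hV dvd F - sum_sq Fs" and "a1 ^ 2 + a2 ^ 2 = 1" and "eval3 F a1 a2 y = 0"
  shows "\<forall>G\<in>set Fs. eval3 G a1 a2 y = 0"
proof -
  have "sum_sq (map (\<lambda>G. eval3 G a1 a2 y) Fs) = 0"
    using eval3_cong[OF assms(1,2)] assms(3) by (simp add: eval3_sum_sq)
  then have "\<forall>x\<in>set (map (\<lambda>G. eval3 G a1 a2 y) Fs). x = 0"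
    by (simp only: sum_sq_eq_0_iff)
  then show ?thesis
    by simp
qed

lemma eval2_sos_mod_nonneg:
  assumes "sos_mod hC c" and "a1 ^ 2 + a2 ^ 2 = 1"
  shows "eval2 c a1 a2 \<ge> 0"
proof -
  obtain cs where "hC dvd c - sum_sq cs"
    using assms(1) unfolding sos_mod_def by blast
  then show ?thesis
    using eval2_cong[OF _ assms(2)] sum_sq_nonneg[of "map (\<lambda>c. eval2 c a1 a2) cs"]
    by (simp add: eval2_sum_sq)
qed

lemma eval2_eq_0_decomp:
  assumes "eval2 c a1 a2 = 0"
  obtains A B where "c = (X2 - const2 a2) * A + (X1 - const2 a1) * B"
proof -
  define r where "r = poly c [:a2:]"
  have "poly (c - [:r:]) [:a2:] = 0"
    by (simp add: r_def)
  then obtain A where A: "c - [:r:] = [:- [:a2:], 1:] * A"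
    by (metis poly_eq_0_iff_dvd dvdE)
  have "poly r a1 = 0"
    using assms by (simp add: r_def eval2_def)
  then obtain s where s: "r = [:- a1, 1:] * s"
    by (metis poly_eq_0_iff_dvd dvdE)
  have "c = (X2 - const2 a2) * A + (X1 - const2 a1) * [:s:]"
    using A by (simp add: X1_def X2_def const2_def s algebra_simps)
  then show thesis ..
qed

lemma eval3_eq_0_decomp:
  assumes "\<And>y. eval3 F a1 a2 y = 0"
  obtains A B where "F = [:X2 - const2 a2:] * A + [:X1 - const2 a1:] * B"
proof -
  have "poly (map_poly (\<lambda>c. eval2 c a1 a2) F) y = 0" for y
    using assms[of y] by (simp add: eval3_eq_poly_map_poly)
  then have "map_poly (\<lambda>c. eval2 c a1 a2) F = 0"
    using poly_all_0_iff_0 by blast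
  then have "\<forall>i. eval2 (coeff F i) a1 a2 = 0"
    by (metis coeff_0 coeff_map_poly eval2_simps(1))
  then have "\<exists>A B. F = [:X2 - const2 a2:] * A + [:X1 - const2 a1:] * B"
  proof (induction F)
    case 0
    show ?case by (intro exI[of _ 0]) simp
  next
    case (pCons c F)
    obtain a b where "c = (X2 - const2 a2) * a + (X1 - const2 a1) * b"
      using pCons.prems eval2_eq_0_decomp by (metis coeff_pCons_0)
    moreover obtain A B where "F = [:X2 - const2 a2:] * A + [:X1 - const2 a1:] * B"
      using pCons.prems pCons.IH by (metis coeff_pCons_Suc)
    ultimately have "pCons c F = [:X2 - const2 a2:] * pCons a A + [:X1 - const2 a1:] * pCons b B"
      by simp
    then show ?case by blast
  qed
  then show thesis
    using that by blast
qed

lemma sos_mod_hC_tangent_factor: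
  assumes "sos_mod hC b" and a: "a1 ^ 2 + a2 ^ 2 = 1" and "eval2 b a1 a2 = 0"
  obtains b' where "sos_mod hC b'" and "hC dvd b - tangent a1 a2 * b'"
proof -
  obtain bs where bs: "hC dvd b - sum_sq bs"
    using assms(1) unfolding sos_mod_def by blast
  have "\<exists>u v. hC dvd c ^ 2 - tangent a1 a2 * (u ^ 2 + v ^ 2)" if "c \<in> set bs" for c
  proof -
    have "eval2 c a1 a2 = 0"
      using eval2_sum_sq_eq_0[OF bs a assms(3)] that by blast
    then obtain A B where "c = (X2 - const2 a2) * A + (X1 - const2 a1) * B"
      by (rule eval2_eq_0_decomp)
    moreover have "const2 a1 ^ 2 + const2 a2 ^ 2 = 1"
      "const2 (sqrt (1/2)) ^ 2 + const2 (sqrt (1/2)) ^ 2 = 1"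
      using a by simp_all
    ultimately show ?thesis
      using square_mod_circle_tangent[of "const2 a1" "const2 a2" "const2 (sqrt (1/2))" X1 X2 A B]
      by (simp add: hC_eq tangent_eq)
  qed
  then show thesis
    using sos_mod_factor[OF bs] that by blast
qed

lemma sos_mod_hV_tangent_factor:
  assumes "sos_mod hV f" and a: "a1 ^ 2 + a2 ^ 2 = 1" and "\<And>y. eval3 f a1 a2 y = 0"
  obtains f' where "sos_mod hV f'" and "hV dvd f - [:tangent a1 a2:] * f'"
proof -
  obtain fs where fs: "hV dvd f - sum_sq fs"
    using assms(1) unfolding sos_mod_def by blast
  have "\<exists>u v. hV dvd F ^ 2 - [:tangent a1 a2:] * (u ^ 2 + v ^ 2)" if "F \<in> set fs" for F
  proof -
    have "eval3 F a1 a2 y = 0" for y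
      using eval3_sum_sq_eq_0[OF fs a assms(3)] that by blast
    then obtain A B where "F = [:X2 - const2 a2:] * A + [:X1 - const2 a1:] * B"
      by (rule eval3_eq_0_decomp)
    moreover have "[:const2 a1:] ^ 2 + [:const2 a2:] ^ 2 = 1"
      "[:const2 (sqrt (1/2)):] ^ 2 + [:const2 (sqrt (1/2)):] ^ 2 = 1"
      using a by (simp_all add: poly_const_pow one_pCons)
    ultimately show ?thesis
      using square_mod_circle_tangent[of "[:const2 a1:]" "[:const2 a2:]" "[:const2 (sqrt (1/2)):]"
          "[:X1:]" "[:X2:]" A B]
      by (simp add: hV_def hC_eq tangent_eq poly_const_pow one_pCons
          mult.commute[of X1] mult.commute[of X2])
  qed
  then show thesis
    using sos_mod_factor[OF fs] that by blast
qed

section \<open>Reduced forms and the norm\<close>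

definition x1sq_minus_1 :: "real poly" where
  "x1sq_minus_1 = [:-1, 0, 1:]"

lemma hC_eq_pCons: "hC = [:x1sq_minus_1, 0, 1:]"
  by (simp add: hC_def x1sq_minus_1_def)

lemma hC_dvd_reduce:
  obtains p q where "hC dvd b - [:p, q:]"
proof -
  have "\<exists>p q. hC dvd b - [:p, q:]"
  proof (induction b)
    case 0
    show ?case by (intro exI[of _ 0]) simp
  next
    case (pCons c b)
    then obtain p q where "hC dvd b - [:p, q:]"
      by blast
    moreover have "pCons 0 (b - [:p, q:]) = [:0, 1:] * (b - [:p, q:])"
      by simp
    ultimately have "hC dvd pCons 0 (b - [:p, q:]) + hC * [:q:]"
      by (metis dvd_add dvd_mult dvd_triv_left)
    moreover have "pCons 0 (b - [:p, q:]) + hC * [:q:] = pCons c b - [:c - x1sq_minus_1 * q, p:]"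
      by (simp add: hC_eq_pCons algebra_simps)
    ultimately show ?case
      by metis
  qed
  then show thesis
    using that by blast
qed

lemma hC_dvd_linear_iff: "hC dvd [:p, q:] \<longleftrightarrow> p = 0 \<and> q = 0"
proof
  assume dvd: "hC dvd [:p, q:]"
  show "p = 0 \<and> q = 0"
  proof (rule ccontr)
    assume "\<not> (p = 0 \<and> q = 0)"
    then have "degree hC \<le> degree [:p, q:]"
      using dvd by (intro dvd_imp_degree_le) auto
    moreover have "degree [:p, q:] \<le> 1"
      by (simp add: degree_pCons_le)
    ultimately show False
      by (simp add: hC_def)
  qed
qed simp

definition circle_norm :: "real poly \<Rightarrow> real poly \<Rightarrow> real poly" where
  "circle_norm p q = p ^ 2 + x1sq_minus_1 * q ^ 2"

lemma hC_dvd_reduced_mult: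
  "hC dvd [:p, q:] * [:r, s:] - [:p * r - x1sq_minus_1 * q * s, p * s + q * r:]"
proof -
  have "[:p, q:] * [:r, s:] - [:p * r - x1sq_minus_1 * q * s, p * s + q * r:] = hC * [:q * s:]"
    by (simp add: hC_eq_pCons algebra_simps)
  then show ?thesis
    by (metis dvd_triv_left)
qed

lemma circle_norm_mult:
  "circle_norm (p * r - x1sq_minus_1 * q * s) (p * s + q * r) = circle_norm p q * circle_norm r s"
  unfolding circle_norm_def by (simp add: algebra_simps power2_eq_square)

lemma hC_dvd_conj_mult: "hC dvd [:p, - q:] * [:p, q:] - [:circle_norm p q:]"
proof -
  have "[:p * p - x1sq_minus_1 * - q * q, p * q + - q * p:] = [:circle_norm p q:]"
    by (simp add: circle_norm_def power2_eq_square)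
  then show ?thesis
    using hC_dvd_reduced_mult[of p "- q" p q] by simp
qed

lemma hC_dvd_const_mult_cancel:
  assumes "m \<noteq> 0" and "hC dvd [:m:] * c"
  shows "hC dvd c"
proof -
  obtain p q where pq: "hC dvd c - [:p, q:]"
    by (rule hC_dvd_reduce)
  have "hC dvd [:m:] * c - [:m:] * (c - [:p, q:])"
    by (rule dvd_diff[OF assms(2) dvd_mult[OF pq]])
  moreover have "[:m:] * c - [:m:] * (c - [:p, q:]) = [:m * p, m * q:]"
    by (simp add: right_diff_distrib)
  ultimately have "p = 0 \<and> q = 0"
    using assms(1) by (simp add: hC_dvd_linear_iff)
  then show ?thesis
    using pq by simp
qed

lemma hC_dvd_mult_cancel:
  assumes "circle_norm p q \<noteq> 0" and "hC dvd [:p, q:] * c"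
  shows "hC dvd c"
proof -
  have "hC dvd [:p, - q:] * ([:p, q:] * c) - ([:p, - q:] * [:p, q:] - [:circle_norm p q:]) * c"
    by (rule dvd_diff[OF dvd_mult[OF assms(2)] dvd_mult2[OF hC_dvd_conj_mult]])
  moreover have "[:p, - q:] * ([:p, q:] * c) - ([:p, - q:] * [:p, q:] - [:circle_norm p q:]) * c
      = [:circle_norm p q:] * c"
    by (simp only: left_diff_distrib mult.assoc diff_diff_eq2 diff_self add_0)
  ultimately show ?thesis
    using assms(1) hC_dvd_const_mult_cancel by metis
qed

lemma hV_dvd_iff: "hV dvd F \<longleftrightarrow> (\<forall>n. hC dvd coeff F n)"
  unfolding hV_def by (rule const_poly_dvd_iff)

lemma hV_dvd_const_iff: "hV dvd [:c:] \<longleftrightarrow> hC dvd c"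
  unfolding hV_def by (rule const_poly_dvd_const_poly_iff)

lemma hV_dvd_mult_cancel:
  assumes "circle_norm p q \<noteq> 0" and "hV dvd [:[:p, q:]:] * F"
  shows "hV dvd F"
proof -
  have "hC dvd coeff ([:[:p, q:]:] * F) n" for n
    using assms(2) unfolding hV_dvd_iff ..
  then have "hC dvd [:p, q:] * coeff F n" for n
    by simp
  then show ?thesis
    unfolding hV_dvd_iff using hC_dvd_mult_cancel[OF assms(1)] by blast
qed

lemma degree_le_add_of_lead_coeff_nonneg:
  fixes P Q :: "'a::linordered_idom poly"
  assumes "lead_coeff P \<ge> 0" and "lead_coeff Q > 0"
  shows "degree Q \<le> degree (P + Q)"
proof (cases "degree P = degree Q")
  case True
  then have "coeff (P + Q) (degree Q) = lead_coeff P + lead_coeff Q"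
    by simp
  then have "coeff (P + Q) (degree Q) \<noteq> 0"
    using assms by simp
  then show ?thesis
    by (rule le_degree)
next
  case False
  then show ?thesis
    by (metis degree_add_eq_left degree_add_eq_right linorder_neqE_nat less_imp_le order_refl)
qed

lemma degree_circle_norm_ge:
  assumes "q \<noteq> 0"
  shows "2 + 2 * degree q \<le> degree (circle_norm p q)"
proof -
  have E: "x1sq_minus_1 \<noteq> 0" "degree x1sq_minus_1 = 2" "lead_coeff x1sq_minus_1 = 1"
    by (simp_all add: x1sq_minus_1_def)
  then have "degree (x1sq_minus_1 * q ^ 2) = 2 + 2 * degree q"
    using assms by (simp add: degree_mult_eq degree_power_eq)
  moreover have "lead_coeff (x1sq_minus_1 * q ^ 2) > 0"
    using assms E by (simp add: lead_coeff_mult lead_coeff_power)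
  ultimately show ?thesis
    unfolding circle_norm_def
    by (metis degree_le_add_of_lead_coeff_nonneg lead_coeff_power zero_le_power2)
qed

lemma circle_norm_eq_0_iff: "circle_norm p q = 0 \<longleftrightarrow> p = 0 \<and> q = 0"
proof (cases "q = 0")
  case False
  then show ?thesis
    using degree_circle_norm_ge[of q p] by auto
qed (simp add: circle_norm_def)

lemma degree_circle_norm_eq_0:
  assumes "degree (circle_norm p q) = 0"
  shows "q = 0" and "degree p = 0"
proof -
  show q: "q = 0"
    using assms degree_circle_norm_ge[of q p] by (cases "q = 0") auto
  have "degree (p ^ 2) = 0"
    using assms by (simp add: circle_norm_def q)
  then show "degree p = 0"
    by (cases "p = 0") (auto simp: degree_power_eq)
qed

lemma circle_norm_tangent:
  assumes "a1 ^ 2 + a2 ^ 2 = 1"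
  shows "circle_norm [:1, - a1:] [:- a2:] = [:- a1, 1:] ^ 2"
proof -
  have "a2 * a2 = 1 - a1 * a1"
    using assms by (simp add: power2_eq_square)
  then show ?thesis
    by (simp add: circle_norm_def x1sq_minus_1_def power2_eq_square algebra_simps)
qed

lemma circle_norm_tangent_quotient:
  assumes a: "a1 ^ 2 + a2 ^ 2 = 1" and bb': "hC dvd b - tangent a1 a2 * b'"
    and pq: "hC dvd b - [:p, q:]" and pq': "hC dvd b' - [:p', q':]"
  shows "circle_norm p q = [:- a1, 1:] ^ 2 * circle_norm p' q'"
proof -
  define r where "r = [:1, - a1:]"
  define s where "s = [:- a2:]"
  define P where "P = r * p' - x1sq_minus_1 * s * q'"
  define Q where "Q = r * q' + s * p'"
  have T: "tangent a1 a2 = [:r, s:]"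
    by (simp add: tangent_def r_def s_def)
  have "[:p - P, q - Q:] = (b - tangent a1 a2 * b') - (b - [:p, q:])
      + tangent a1 a2 * (b' - [:p', q':]) + ([:r, s:] * [:p', q':] - [:P, Q:])"
    by (simp add: T algebra_simps)
  moreover have "hC dvd [:r, s:] * [:p', q':] - [:P, Q:]"
    unfolding P_def Q_def by (rule hC_dvd_reduced_mult)
  ultimately have "hC dvd [:p - P, q - Q:]"
    using bb' pq pq' by (metis dvd_add dvd_diff dvd_mult)
  then have "p = P" and "q = Q"
    by (simp_all add: hC_dvd_linear_iff)
  then have "circle_norm p q = circle_norm r s * circle_norm p' q'"
    unfolding P_def Q_def by (simp only: circle_norm_mult)
  then show ?thesis
    unfolding r_def s_def circle_norm_tangent[OF a] .
qed

section \<open>Complex zeros on the circle\<close>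

lemma map_poly_add:
  assumes "h 0 = 0" and "\<And>x y. h (x + y) = h x + h y"
  shows "map_poly h (p + q) = map_poly h p + map_poly h q"
  by (rule poly_eqI) (simp add: coeff_map_poly assms)

lemma map_poly_diff:
  assumes "h 0 = 0" and "\<And>x y. h (x - y) = h x - h y"
  shows "map_poly h (p - q) = map_poly h p - map_poly h q"
  by (rule poly_eqI) (simp add: coeff_map_poly assms)

lemma map_poly_mult:
  fixes h :: "'a::comm_semiring_1 \<Rightarrow> 'b::comm_semiring_1"
  assumes "h 0 = 0" and "\<And>x y. h (x + y) = h x + h y" and "\<And>x y. h (x * y) = h x * h y"
  shows "map_poly h (p * q) = map_poly h p * map_poly h q"
proof (rule poly_eqI)
  fix n
  have "h (sum f A) = sum (h \<circ> f) A" if "finite A" for f :: "nat \<Rightarrow> 'a" and A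
    using that by (induction A rule: finite_induct) (simp_all add: assms)
  then show "coeff (map_poly h (p * q)) n = coeff (map_poly h p * map_poly h q) n"
    by (simp add: coeff_map_poly coeff_mult assms)
qed

definition evalC1 :: "real poly \<Rightarrow> complex \<Rightarrow> complex" where
  "evalC1 p z = poly (map_poly complex_of_real p) z"

lemma evalC1_simps [simp]:
  "evalC1 0 z = 0" "evalC1 [:r:] z = complex_of_real r"
  "evalC1 (p + q) z = evalC1 p z + evalC1 q z"
  "evalC1 (p - q) z = evalC1 p z - evalC1 q z"
  "evalC1 (p * q) z = evalC1 p z * evalC1 q z"
  by (simp_all add: evalC1_def map_poly_pCons map_poly_add map_poly_diff map_poly_mult)

lemma evalC_eq_evalC1: "evalC b z1 z2 = poly (map_poly (\<lambda>q. evalC1 q z1) b) z2"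
  by (simp add: evalC_def evalC1_def)

lemma evalC_simps [simp]:
  "evalC 0 z1 z2 = 0"
  "evalC (b - c) z1 z2 = evalC b z1 z2 - evalC c z1 z2"
  "evalC (b * c) z1 z2 = evalC b z1 z2 * evalC c z1 z2"
  by (simp_all add: evalC_eq_evalC1 map_poly_diff map_poly_add map_poly_mult)

lemma evalC_linear: "evalC [:p, q:] z1 z2 = evalC1 p z1 + z2 * evalC1 q z1"
  by (simp add: evalC_eq_evalC1 map_poly_pCons)

lemma evalC_hC: "evalC hC z1 z2 = z1 ^ 2 + z2 ^ 2 - 1"
  by (simp add: evalC_eq_evalC1 hC_def evalC1_def map_poly_pCons power2_eq_square)

lemma evalC_cong:
  assumes "hC dvd b - c" and "z1 ^ 2 + z2 ^ 2 = 1"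
  shows "evalC b z1 z2 = evalC c z1 z2"
proof -
  obtain k where "b - c = hC * k"
    using assms(1) by (elim dvdE)
  then have "evalC b z1 z2 - evalC c z1 z2 = evalC hC z1 z2 * evalC k z1 z2"
    by (metis evalC_simps(2,3))
  then show ?thesis
    using assms(2) by (simp add: evalC_hC)
qed

lemma evalC_of_real: "evalC b (of_real a1) (of_real a2) = of_real (eval2 b a1 a2)"
proof -
  have "evalC1 p (of_real a1) = of_real (poly p a1)" for p
    by (induction p) (simp_all add: evalC1_def map_poly_pCons)
  then show ?thesis
    by (induction b) (simp_all add: evalC_eq_evalC1 eval2_def map_poly_pCons)
qed

lemma evalC1_circle_norm:
  "evalC1 (circle_norm p q) z = evalC1 p z ^ 2 + (z ^ 2 - 1) * evalC1 q z ^ 2"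
proof -
  have "evalC1 x1sq_minus_1 z = z ^ 2 - 1"
    by (simp add: evalC1_def x1sq_minus_1_def map_poly_pCons power2_eq_square)
  then show ?thesis
    by (simp add: circle_norm_def power2_eq_square)
qed

lemma circle_zero_of_circle_norm:
  assumes "degree (circle_norm p q) > 0"
  obtains z1 z2 where "z1 ^ 2 + z2 ^ 2 = 1" and "evalC [:p, q:] z1 z2 = 0"
proof -
  have "degree (map_poly complex_of_real (circle_norm p q)) > 0"
    using assms by (simp add: degree_map_poly)
  then obtain z1 where root: "evalC1 (circle_norm p q) z1 = 0"
    unfolding evalC1_def by (metis fundamental_theorem_of_algebra constant_degree neq0_conv)
  define w where "w = csqrt (1 - z1 ^ 2)"
  have "(evalC1 p z1 + w * evalC1 q z1) * (evalC1 p z1 + (- w) * evalC1 q z1)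
      = evalC1 p z1 ^ 2 - w ^ 2 * evalC1 q z1 ^ 2"
    by (simp add: algebra_simps power2_eq_square)
  also have "\<dots> = evalC1 (circle_norm p q) z1"
    by (simp add: w_def evalC1_circle_norm algebra_simps)
  finally have "(evalC1 p z1 + w * evalC1 q z1) * (evalC1 p z1 + (- w) * evalC1 q z1) = 0"
    using root by simp
  moreover have "z1 ^ 2 + w ^ 2 = 1" "z1 ^ 2 + (- w) ^ 2 = 1"
    by (simp_all add: w_def)
  ultimately show thesis
    using that by (metis evalC_linear mult_eq_0_iff)
qed

definition only_real_zeros :: "real poly poly \<Rightarrow> bool" where
  "only_real_zeros b \<longleftrightarrow>
     (\<forall>z1 z2 :: complex. z1 ^ 2 + z2 ^ 2 = 1 \<and> evalC b z1 z2 = 0 \<longrightarrow> z1 \<in> \<real> \<and> z2 \<in> \<real>)"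

lemma only_real_zeros_not_dvd:
  assumes "only_real_zeros b"
  shows "\<not> hC dvd b"
proof
  assume "hC dvd b"
  define w where "w = \<i> * complex_of_real (sqrt 3)"
  have circle: "2 ^ 2 + w ^ 2 = 1"
    by (simp add: w_def power_mult_distrib flip: of_real_power)
  then have "evalC b 2 w = 0"
    using evalC_cong[of b 0] \<open>hC dvd b\<close> by simp
  then have "w \<in> \<real>"
    using assms circle unfolding only_real_zeros_def by blast
  then show False
    by (simp add: w_def complex_is_Real_iff)
qed

lemma only_real_zeros_factor:
  assumes "only_real_zeros b" and "hC dvd b - c * b'"
  shows "only_real_zeros b'"
  unfolding only_real_zeros_def
proof (intro allI impI)
  fix z1 z2 :: complex
  assume z: "z1 ^ 2 + z2 ^ 2 = 1 \<and> evalC b' z1 z2 = 0"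
  then have "evalC b z1 z2 = 0"
    using evalC_cong[OF assms(2)] by simp
  then show "z1 \<in> \<real> \<and> z2 \<in> \<real>"
    using assms(1) z unfolding only_real_zeros_def by blast
qed

lemma real_circle_zero:
  assumes "only_real_zeros b" and "hC dvd b - [:p, q:]" and "degree (circle_norm p q) > 0"
  obtains a1 a2 where "a1 ^ 2 + a2 ^ 2 = 1" and "eval2 b a1 a2 = 0"
proof -
  obtain z1 z2 where z: "z1 ^ 2 + z2 ^ 2 = 1" "evalC [:p, q:] z1 z2 = 0"
    using circle_zero_of_circle_norm[OF assms(3)] by blast
  then have "evalC b z1 z2 = 0"
    using evalC_cong[OF assms(2)] by simp
  then have "z1 \<in> \<real>" "z2 \<in> \<real>"
    using assms(1) z(1) unfolding only_real_zeros_def by blast+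
  then obtain a1 a2 where "z1 = of_real a1" "z2 = of_real a2"
    by (metis Reals_cases)
  then have "of_real (a1 ^ 2 + a2 ^ 2) = (1 :: complex)" "of_real (eval2 b a1 a2) = (0 :: complex)"
    using z(1) \<open>evalC b z1 z2 = 0\<close> by (simp_all add: evalC_of_real)
  then show thesis
    using that of_real_eq_1_iff of_real_eq_0_iff by blast
qed

section \<open>The descent\<close>

lemma hV_dvd_tangent_quotient:
  assumes a: "a1 ^ 2 + a2 ^ 2 = 1" and fbg: "hV dvd f - [:b:] * g"
    and bb': "hC dvd b - tangent a1 a2 * b'" and ff': "hV dvd f - [:tangent a1 a2:] * f'"
  shows "hV dvd f' - [:b':] * g"
proof -
  have "[:b - tangent a1 a2 * b':] = [:b:] - [:tangent a1 a2:] * [:b':]"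
    by simp
  then have "[:tangent a1 a2:] * (f' - [:b':] * g)
      = (f - [:b:] * g) - (f - [:tangent a1 a2:] * f') + [:b - tangent a1 a2 * b':] * g"
    by algebra
  moreover have "hV dvd [:b - tangent a1 a2 * b':]"
    using bb' by (simp add: hV_dvd_const_iff)
  ultimately have "hV dvd [:tangent a1 a2:] * (f' - [:b':] * g)"
    using dvd_add[OF dvd_diff[OF fbg ff'] dvd_mult2] by metis
  moreover have "circle_norm [:1, - a1:] [:- a2:] \<noteq> 0"
    using circle_norm_tangent[OF a] by simp
  ultimately show ?thesis
    unfolding tangent_def by (rule hV_dvd_mult_cancel[rotated])
qed

lemma sos_mod_quotient_const:
  assumes "sos_mod hC b" and "\<not> hC dvd b" and bc: "hC dvd b - const2 c"
    and "sos_mod hV f" and fbg: "hV dvd f - [:b:] * g"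
  shows "sos_mod hV g"
proof -
  have "c \<noteq> 0"
    using assms(2) bc by auto
  moreover have "c \<ge> 0"
    using eval2_sos_mod_nonneg[OF assms(1), of 1 0] eval2_cong[OF bc, of 1 0] by simp
  ultimately have c: "c > 0"
    by simp
  define s where "s = [:const2 (sqrt (1 / c)):]"
  have "s ^ 2 * [:const2 c:] = 1"
    using c by (simp add: s_def poly_const_pow one_pCons)
  moreover have "[:b - const2 c:] = [:b:] - [:const2 c:]"
    by simp
  ultimately have "s ^ 2 * f - g = s ^ 2 * (f - [:b:] * g) + s ^ 2 * [:b - const2 c:] * g"
    by algebra
  moreover have "hV dvd [:b - const2 c:]"
    using bc by (simp add: hV_dvd_const_iff)
  ultimately have "hV dvd s ^ 2 * f - g"
    using dvd_add[OF dvd_mult[OF fbg] dvd_mult2[OF dvd_mult]] by metis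
  then show ?thesis
    using sos_mod_mult_square[OF assms(4)] sos_mod_cong by blast
qed

lemma tangent_descent:
  assumes b: "sos_mod hC b" "only_real_zeros b" and f: "sos_mod hV f" "hV dvd f - [:b:] * g"
    and pq: "hC dvd b - [:p, q:]" and deg: "degree (circle_norm p q) > 0"
  obtains b' f' p' q' where "sos_mod hC b'" "only_real_zeros b'" "sos_mod hV f'"
    "hV dvd f' - [:b':] * g" "hC dvd b' - [:p', q':]"
    "degree (circle_norm p' q') < degree (circle_norm p q)"
proof -
  obtain a1 a2 where a: "a1 ^ 2 + a2 ^ 2 = 1" and b0: "eval2 b a1 a2 = 0"
    using real_circle_zero[OF b(2) pq deg] .
  obtain b' where b': "sos_mod hC b'" "hC dvd b - tangent a1 a2 * b'"
    using sos_mod_hC_tangent_factor[OF b(1) a b0] .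
  have "eval3 f a1 a2 y = 0" for y
    using eval3_cong[OF f(2) a] b0 by simp
  then obtain f' where f': "sos_mod hV f'" "hV dvd f - [:tangent a1 a2:] * f'"
    using sos_mod_hV_tangent_factor[OF f(1) a] by blast
  obtain p' q' where pq': "hC dvd b' - [:p', q':]"
    by (rule hC_dvd_reduce)
  have rz': "only_real_zeros b'"
    using only_real_zeros_factor[OF b(2) b'(2)] .
  have norm: "circle_norm p q = [:- a1, 1:] ^ 2 * circle_norm p' q'"
    using circle_norm_tangent_quotient[OF a b'(2) pq pq'] .
  have "circle_norm p' q' \<noteq> 0"
    using pq' only_real_zeros_not_dvd[OF rz'] by (auto simp: circle_norm_eq_0_iff)
  then have "degree (circle_norm p' q') < degree (circle_norm p q)"
    unfolding norm by (simp add: degree_mult_eq degree_power_eq)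
  moreover have "hV dvd f' - [:b':] * g"
    using hV_dvd_tangent_quotient[OF a f(2) b'(2) f'(2)] .
  ultimately show thesis
    using that b'(1) rz' f'(1) pq' by blast
qed

lemma sos_mod_quotient_reduced:
  assumes "hC dvd b - [:p, q:]"
    and "sos_mod hC b" and "only_real_zeros b" and "sos_mod hV f" and "hV dvd f - [:b:] * g"
  shows "sos_mod hV g"
  using assms
proof (induction "degree (circle_norm p q)" arbitrary: b f p q rule: less_induct)
  case less
  show ?case
  proof (cases "degree (circle_norm p q) = 0")
    case True
    then have "q = 0" and "p = [:coeff p 0:]"
      using degree_circle_norm_eq_0 by (metis degree_0_id)+
    then have "hC dvd b - const2 (coeff p 0)"
      using less.prems(1) by (metis const2_def pCons_0_0)
    then show ?thesis
      using sos_mod_quotient_const only_real_zeros_not_dvd less.prems by blast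
  next
    case False
    then obtain b' f' p' q' where "sos_mod hC b'" "only_real_zeros b'" "sos_mod hV f'"
      "hV dvd f' - [:b':] * g" "hC dvd b' - [:p', q':]"
      "degree (circle_norm p' q') < degree (circle_norm p q)"
      using tangent_descent less.prems by blast
    then show ?thesis
      using less.hyps by blast
  qed
qed

theorem lemma2p2:
  fixes f g :: "real poly poly poly" and b :: "real poly poly"
  assumes f_sos: "sos_mod hV f"
    and b_sos: "sos_mod hC b"
    and b_real_zeros: "\<forall>z1 z2 :: complex. z1 ^ 2 + z2 ^ 2 = 1 \<and> evalC b z1 z2 = 0
                          \<longrightarrow> z1 \<in> \<real> \<and> z2 \<in> \<real>"
    and fbg: "hV dvd (f - [:b:] * g)"
  shows "sos_mod hV g"
proof -
  obtain p q where "hC dvd b - [:p, q:]"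
    by (rule hC_dvd_reduce)
  moreover have "only_real_zeros b"
    unfolding only_real_zeros_def by (rule b_real_zeros)
  ultimately show ?thesis
    using sos_mod_quotient_reduced b_sos f_sos fbg by blast
qed

end
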